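(* (Compatibility is transitive.) For all matches $(p,\sigma)$, $(q,\rho)$, $(r,\theta)$: if $p,\sigma\sqsubseteq q,\rho$ and $q,\rho\sqsubseteq r,\theta$, then $p,\sigma\sqsubseteq r,\theta$.
   Context: CPC patterns over a countable set of names: $p ::= \lambda x \mid x \mid \ulcorner x\urcorner \mid p\bullet p$ (binding name, variable name, protected name, compound). ${\sf bn}(p)$, ${\sf vn}(p)$, ${\sf pn}(p)$ are the sets of binding, variable and protected names of $p$; ${\sf fn}(p)={\sf vn}(p)\cup{\sf pn}(p)$. Patterns are well formed (binding names pairwise distinct and distinct from free names). Communicable patterns contain no protected or binding names. A substitution is a finite partial function from names to communicable patterns; $\hat\sigma$ acts on patterns by $\hat\sigma x=x$, $\hat\sigma\ulcorner x\urcorner=\ulcorner x\urcorner$, $\hat\sigma(\lambda x)=\sigma(x)$ if $x\in{\sf dom}(\sigma)$ else $\lambda x$, $\hat\sigma(p\bullet q)=\hat\sigma p\bullet\hat\sigma q$. A match $(p,\sigma)$ is a pattern $p$ and substitution $\sigma$ with ${\sf dom}(\sigma)={\sf bn}(p)$. Compatibility $p,\sigma\sqsubseteq q,\rho$ is the least relation between matches with: $p,\sigma\sqsubseteq\lambda y,\{\hat\sigma p/y\}$ if ${\sf fn}(p)=\emptyset$; $n,\{\}\sqsubseteq n,\{\}$; $\ulcorner n\urcorner,\{\}\sqsubseteq\ulcorner n\urcorner,\{\}$; $\ulcorner n\urcorner,\{\}\sqsubseteq n,\{\}$; $p_1\bullet p_2,\sigma_1\cup\sigma_2\sqsubseteq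 q_1\bullet q_2,\rho_1\cup\rho_2$ if $p_i,\sigma_i\sqsubseteq q_i,\rho_i$ for $i=1,2$. *)

theory Defs
  imports Main
begin

text \<open>CPC patterns over a type of names 'n:
  Bind x = lambda x (binding name), Var x = x (variable name),
  Prot x = protected name, Comp p q = p \<bullet> q.\<close>

datatype 'n pat = Bind 'n | Var 'n | Prot 'n | Comp "'n pat" "'n pat"

text \<open>Binding names as a list (to express pairwise distinctness).\<close>
fun bnl :: "'n pat \<Rightarrow> 'n list" where
  "bnl (Bind x) = [x]"
| "bnl (Var x) = []"
| "bnl (Prot x) = []"
| "bnl (Comp p q) = bnl p @ bnl q"

definition bn :: "'n pat \<Rightarrow> 'n set" where
  "bn p = set (bnl p)"

fun vn :: "'n pat \<Rightarrow> 'n set" where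
  "vn (Bind x) = {}"
| "vn (Var x) = {x}"
| "vn (Prot x) = {}"
| "vn (Comp p q) = vn p \<union> vn q"

fun pn :: "'n pat \<Rightarrow> 'n set" where
  "pn (Bind x) = {}"
| "pn (Var x) = {}"
| "pn (Prot x) = {x}"
| "pn (Comp p q) = pn p \<union> pn q"

definition fn :: "'n pat \<Rightarrow> 'n set" where
  "fn p = vn p \<union> pn p"

definition well_formed :: "'n pat \<Rightarrow> bool" where
  "well_formed p \<longleftrightarrow> distinct (bnl p) \<and> bn p \<inter> fn p = {}"

definition communicable :: "'n pat \<Rightarrow> bool" where
  "communicable p \<longleftrightarrow> pn p = {} \<and> bn p = {}"

type_synonym 'n subst = "'n \<rightharpoonup> 'n pat"

definition is_subst :: "'n subst \<Rightarrow> bool" where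
  "is_subst \<sigma> \<longleftrightarrow> finite (dom \<sigma>) \<and> (\<forall>t \<in> ran \<sigma>. communicable t)"

fun subst_app :: "'n subst \<Rightarrow> 'n pat \<Rightarrow> 'n pat" where
  "subst_app \<sigma> (Var x) = Var x"
| "subst_app \<sigma> (Prot x) = Prot x"
| "subst_app \<sigma> (Bind x) = (case \<sigma> x of Some t \<Rightarrow> t | None \<Rightarrow> Bind x)"
| "subst_app \<sigma> (Comp p q) = Comp (subst_app \<sigma> p) (subst_app \<sigma> q)"

definition is_match :: "'n pat \<Rightarrow> 'n subst \<Rightarrow> bool" where
  "is_match p \<sigma> \<longleftrightarrow> well_formed p \<and> is_subst \<sigma> \<and> dom \<sigma> = bn p"

text \<open>Compatibility: the least relation between matches closed under the rules.
  Union of substitutions is map union (domains are disjoint for matches).\<close>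
inductive compat :: "'n pat \<Rightarrow> 'n subst \<Rightarrow> 'n pat \<Rightarrow> 'n subst \<Rightarrow> bool" where
  bind: "\<lbrakk> is_match p \<sigma>; fn p = {}; is_match (Bind y) [y \<mapsto> subst_app \<sigma> p] \<rbrakk>
         \<Longrightarrow> compat p \<sigma> (Bind y) [y \<mapsto> subst_app \<sigma> p]"
| var: "compat (Var n) Map.empty (Var n) Map.empty"
| prot: "compat (Prot n) Map.empty (Prot n) Map.empty"
| prot_var: "compat (Prot n) Map.empty (Var n) Map.empty"
| comp: "\<lbrakk> compat p1 \<sigma>1 q1 \<rho>1; compat p2 \<sigma>2 q2 \<rho>2;
           is_match (Comp p1 p2) (\<sigma>1 ++ \<sigma>2); is_match (Comp q1 q2) (\<rho>1 ++ \<rho>2) \<rbrakk>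
         \<Longrightarrow> compat (Comp p1 p2) (\<sigma>1 ++ \<sigma>2) (Comp q1 q2) (\<rho>1 ++ \<rho>2)"

end

theory Submission
  imports Defs
begin

text \<open>Transitivity is proved by rule induction on the second compatibility, inverting the
  first one. The only non-structural case is a binding name \<open>\<lambda>y\<close> on the right: then
  \<open>q\<close> has no free names, and since compatibility with a pattern without free names forces
  the left-hand pattern to have none either and to yield the same instantiated pattern,
  \<open>p, \<sigma>\<close> is compatible with \<open>\<lambda>y\<close> by the same rule. In the compound case, the two splittings
  of the middle substitution agree because their domains are the binding names of the
  components.\<close>

lemma compat_is_match: "compat p \<sigma> q \<rho> \<Longrightarrow> is_match p \<sigma> \<and> is_match q \<rho>"
proof (induction rule: compat.induct)
  case (bind p \<sigma> y)
  then show ?case by blast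
qed (auto simp: is_match_def well_formed_def is_subst_def bn_def fn_def)

lemma is_match_Comp_bn_disjoint: "is_match (Comp p1 p2) \<sigma> \<Longrightarrow> bn p1 \<inter> bn p2 = {}"
  by (auto simp: is_match_def well_formed_def bn_def)

lemma map_add_cancel:
  assumes "dom a = dom a'" and "dom b = dom b'" and "dom a \<inter> dom b = {}"
    and "a ++ b = a' ++ b'"
  shows "a = a' \<and> b = b'"
proof (intro conjI ext)
  fix x
  have eq: "(a ++ b) x = (a' ++ b') x" using assms(4) by simp
  show "a x = a' x"
  proof (cases "x \<in> dom b")
    case True
    then have "x \<notin> dom a" "x \<notin> dom a'" using assms(1,3) by auto
    then show ?thesis by (simp add: domIff)
  next
    case False
    with eq show ?thesis using assms(2) by (simp add: map_add_dom_app_simps(3))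
  qed
  show "b x = b' x"
  proof (cases "x \<in> dom b")
    case True
    with eq show ?thesis using assms(2) by (simp add: map_add_dom_app_simps(1))
  next
    case False
    then have "x \<notin> dom b'" using assms(2) by simp
    with False show ?thesis by (simp add: domIff)
  qed
qed

lemma subst_app_cong: "(\<And>x. x \<in> bn p \<Longrightarrow> \<sigma> x = \<sigma>' x) \<Longrightarrow> subst_app \<sigma> p = subst_app \<sigma>' p"
  by (induction p) (auto simp: bn_def)

lemma subst_app_map_add_left:
  "bn p \<subseteq> dom \<sigma>1 \<Longrightarrow> dom \<sigma>1 \<inter> dom \<sigma>2 = {} \<Longrightarrow> subst_app (\<sigma>1 ++ \<sigma>2) p = subst_app \<sigma>1 p"
  by (rule subst_app_cong) (metis disjoint_iff map_add_dom_app_simps(3) subsetD)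

lemma subst_app_map_add_right:
  "bn p \<subseteq> dom \<sigma>2 \<Longrightarrow> subst_app (\<sigma>1 ++ \<sigma>2) p = subst_app \<sigma>2 p"
  by (rule subst_app_cong) (auto simp: map_add_dom_app_simps(1))

lemma subst_app_map_add_Comp_match:
  assumes "is_match (Comp p1 p2) (\<sigma>1 ++ \<sigma>2)" and "is_match p1 \<sigma>1" and "is_match p2 \<sigma>2"
  shows "subst_app (\<sigma>1 ++ \<sigma>2) p1 = subst_app \<sigma>1 p1 \<and> subst_app (\<sigma>1 ++ \<sigma>2) p2 = subst_app \<sigma>2 p2"
proof -
  have "dom \<sigma>1 \<inter> dom \<sigma>2 = {}"
    using is_match_Comp_bn_disjoint[OF assms(1)] assms(2,3) by (simp add: is_match_def)
  with assms(2,3) show ?thesis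
    by (simp add: is_match_def subst_app_map_add_left subst_app_map_add_right)
qed

lemma compat_fn_empty:
  "compat p \<sigma> q \<rho> \<Longrightarrow> fn q = {} \<Longrightarrow> fn p = {} \<and> subst_app \<sigma> p = subst_app \<rho> q"
proof (induction rule: compat.induct)
  case (comp p1 \<sigma>1 q1 \<rho>1 p2 \<sigma>2 q2 \<rho>2)
  have "is_match p1 \<sigma>1" "is_match q1 \<rho>1" "is_match p2 \<sigma>2" "is_match q2 \<rho>2"
    using comp.hyps(1,2) compat_is_match by blast+
  with comp show ?case by (auto simp: fn_def subst_app_map_add_Comp_match)
qed (auto simp: fn_def)

lemma compat_trans: "compat q \<rho> r \<theta> \<Longrightarrow> compat p \<sigma> q \<rho> \<Longrightarrow> compat p \<sigma> r \<theta>"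
proof (induction arbitrary: p \<sigma> rule: compat.induct)
  case (bind q \<rho> y)
  then have "fn p = {}" and "subst_app \<sigma> p = subst_app \<rho> q"
    using compat_fn_empty by blast+
  with bind show ?case using compat.bind compat_is_match by metis
next
  case (prot_var n)
  then show ?case by (cases rule: compat.cases) (auto intro: compat.prot_var)
next
  case (comp q1 \<rho>1 r1 \<theta>1 q2 \<rho>2 r2 \<theta>2)
  from comp.prems obtain p1 \<sigma>1 \<rho>1' p2 \<sigma>2 \<rho>2' where
    p: "p = Comp p1 p2" and \<sigma>: "\<sigma> = \<sigma>1 ++ \<sigma>2" and split: "\<rho>1 ++ \<rho>2 = \<rho>1' ++ \<rho>2'"
    and left: "compat p1 \<sigma>1 q1 \<rho>1'" "compat p2 \<sigma>2 q2 \<rho>2'"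
    and match: "is_match (Comp p1 p2) (\<sigma>1 ++ \<sigma>2)"
    by (cases rule: compat.cases) auto
  have "is_match q1 \<rho>1" "is_match q2 \<rho>2" "is_match q1 \<rho>1'" "is_match q2 \<rho>2'"
    using compat_is_match comp.hyps(1,2) left by blast+
  moreover have "bn q1 \<inter> bn q2 = {}"
    using is_match_Comp_bn_disjoint comp.hyps(3) by blast
  ultimately have "\<rho>1' = \<rho>1 \<and> \<rho>2' = \<rho>2"
    using map_add_cancel[OF _ _ _ split[symmetric]] by (simp add: is_match_def)
  then show ?case using p \<sigma> left match comp.IH comp.hyps(4) compat.comp by metis
qed simp_all

theorem proposition3p19:
  fixes p q r :: "'n pat" and \<sigma> \<rho> \<theta> :: "'n subst"
  assumes "is_match p \<sigma>" and "is_match q \<rho>" and "is_match r \<theta>"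
    and "compat p \<sigma> q \<rho>" and "compat q \<rho> r \<theta>"
  shows "compat p \<sigma> r \<theta>"
  using compat_trans[OF assms(5,4)] .

end
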